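(* Let $d\ge1$, let $\{1,\dots,d\}$ be partitioned into $\mathcal{D}$ and $\mathcal{U}$ with $|\mathcal{D}|=1$, let $\mathbb{C}$ be the contribution matrix of a causal graph, $c\in\mathbb{R}^d$ with $c_f>0$, $\alpha>0$, $p\in[1,3]$, and $\beta\in(0,1]$. Then the set $$\mathcal{H}=\{h_0\in\mathbb{R}^d:\ \mathbb{C}h_0\ge0\ \text{and every optimal solution of } \min_{e\ge0}\Big(\sum_f c_fe_f^{\,p}\Big)^{1/p}\ \text{s.t.}\ (\mathbb{C}h_0)^\top e\ge\alpha\ \text{is }\beta\text{-desirable}\}$$ of $\beta$-desirable classifiers is convex.
   Context: A causal graph is a weighted directed acyclic graph on $\{1,\dots,d\}$ with adjacency matrix $A$ ($A_{ij}$ the weight of edge $i\to j$, $0$ if absent); its contribution matrix is $\mathbb{C}=\sum_{k=0}^{d}A^k$. $\mathcal{D}$ is the set of desirable features, $\mathcal{U}$ the set of undesirable features. An effort profile $e$ is $\beta$-desirable if $\|e_{\mathcal{D}}\|_2\ge\beta\|e\|_2$, where $e_{\mathcal{D}}$ is the restriction of $e$ to coordinates in $\mathcal{D}$. *)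

theory Defs
  imports "HOL-Analysis.Analysis"
begin

primrec matpow :: "real^'n^'n \<Rightarrow> nat \<Rightarrow> real^'n^'n" where
  "matpow A 0 = mat 1"
| "matpow A (Suc k) = matpow A k ** A"

definition is_dag :: "real^'n^'n \<Rightarrow> bool" where
  "is_dag A \<longleftrightarrow> acyclic {(i, j). A $ i $ j \<noteq> 0}"

definition contribution_matrix :: "real^'n^'n \<Rightarrow> real^'n^'n" where
  "contribution_matrix A = (\<Sum>k\<in>{0..CARD('n)}. matpow A k)"

definition nonneg_vec :: "real^'n \<Rightarrow> bool" where
  "nonneg_vec x \<longleftrightarrow> (\<forall>i. 0 \<le> x $ i)"

definition effort_cost :: "real^'n \<Rightarrow> real \<Rightarrow> real^'n \<Rightarrow> real" where
  "effort_cost c p e = (\<Sum>f\<in>UNIV. c $ f * (e $ f) powr p) powr (1 / p)"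

definition feasible_effort :: "real^'n^'n \<Rightarrow> real \<Rightarrow> real^'n \<Rightarrow> real^'n \<Rightarrow> bool" where
  "feasible_effort C \<alpha> h0 e \<longleftrightarrow> nonneg_vec e \<and> (C *v h0) \<bullet> e \<ge> \<alpha>"

definition optimal_effort ::
  "real^'n^'n \<Rightarrow> real^'n \<Rightarrow> real \<Rightarrow> real \<Rightarrow> real^'n \<Rightarrow> real^'n \<Rightarrow> bool" where
  "optimal_effort C c p \<alpha> h0 e \<longleftrightarrow> feasible_effort C \<alpha> h0 e \<and>
     (\<forall>e'. feasible_effort C \<alpha> h0 e' \<longrightarrow> effort_cost c p e \<le> effort_cost c p e')"

definition beta_desirable :: "'n set \<Rightarrow> real \<Rightarrow> real^'n \<Rightarrow> bool" where
  "beta_desirable D \<beta> e \<longleftrightarrow> sqrt (\<Sum>i\<in>D. (e $ i)^2) \<ge> \<beta> * norm e"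

definition desirable_classifiers ::
  "real^'n^'n \<Rightarrow> 'n set \<Rightarrow> real^'n \<Rightarrow> real \<Rightarrow> real \<Rightarrow> real \<Rightarrow> (real^'n) set" where
  "desirable_classifiers C D c p \<alpha> \<beta> =
     {h0. nonneg_vec (C *v h0) \<and>
          (\<forall>e. optimal_effort C c p \<alpha> h0 e \<longrightarrow> beta_desirable D \<beta> e)}"

end

theory Submission
  imports Defs
begin

text \<open>Writing \<open>w = \<C> h\<^sub>0\<close>, the set of classifiers is the preimage under the linear map
  \<open>h\<^sub>0 \<mapsto> \<C> h\<^sub>0\<close> of the set of score vectors \<open>w \<ge> 0\<close> whose optimal efforts are all
  \<open>\<beta>\<close>-desirable, so it suffices that this set is convex. Let \<open>\<D> = {d}\<close>.
  For \<open>p > 1\<close> the optimal effort is unique and proportional to \<open>(w\<^sub>f / c\<^sub>f)\<^bsup>1/(p-1)\<^esup>\<close>;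
  with \<open>x = w / c\<close> and \<open>s = 2/(p-1)\<close> its \<open>\<beta>\<close>-desirability reads
  \<open>\<beta>\<^bsup>2/s\<^esup> \<parallel>x\<parallel>\<^sub>s \<le> x\<^sub>d\<close>, a convex cone by Minkowski's inequality, which needs \<open>s \<ge> 1\<close>,
  i.e. \<open>p \<le> 3\<close>. For \<open>p = 1\<close> the problem is a linear program: all optimal efforts are
  concentrated on \<open>d\<close> iff \<open>d\<close> is the unique maximiser of \<open>w\<^sub>f / c\<^sub>f\<close> (or \<open>w = 0\<close>, when no
  effort is feasible), and these strict linear inequalities again define a convex cone.\<close>

section \<open>Convexity of powers and Minkowski's inequality\<close>

lemma powr_strict_tangent:
  fixes p x y :: real
  assumes p: "p > 1" and x: "x \<ge> 0" and y: "y \<ge> 0" and xy: "x \<noteq> y"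
  shows "y powr p + p * y powr (p - 1) * (x - y) < x powr p"
proof -
  have y_powr: "y powr (p - 1) * y = y powr p" if "y > 0"
    using that by (simp add: powr_diff)
  consider "y = 0" | "x = 0" "y > 0" | "x > 0" "y > 0"
    using x y xy by linarith
  then show ?thesis
  proof cases
    case 1
    then show ?thesis using x xy p by simp
  next
    case 2
    then show ?thesis using p y_powr by (simp add: algebra_simps)
  next
    case 3
    define g where "g t = t powr p - p * y powr (p - 1) * t" for t
    define g' where "g' t = p * t powr (p - 1) - p * y powr (p - 1)" for t
    have "(g has_real_derivative g' t) (at t)" if "t > 0" for t
      unfolding g_def g'_def by (rule derivative_eq_intros refl | use that in simp)+
    then have mvt: "\<exists>z>a. z < b \<and> g b - g a = (b - a) * g' z" if "0 < a" "a < b" for a b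
      using that by (intro MVT2) auto
    have "g y < g x"
    proof (cases "y < x")
      case True
      then obtain z where "y < z" and mean: "g x - g y = (x - y) * g' z"
        using mvt 3 by blast
      have "y powr (p - 1) < z powr (p - 1)"
        using \<open>y < z\<close> 3 p by (intro powr_less_mono2) auto
      then have "0 < (x - y) * g' z" using True p unfolding g'_def by simp
      then show ?thesis using mean by simp
    next
      case False
      with xy have "x < y" by simp
      then obtain z where "x < z" "z < y" and mean: "g y - g x = (y - x) * g' z"
        using mvt 3 by blast
      have "z powr (p - 1) < y powr (p - 1)"
        using \<open>x < z\<close> \<open>z < y\<close> 3 p by (intro powr_less_mono2) auto
      then have "(y - x) * g' z < 0" using \<open>x < y\<close> p unfolding g'_def by (simp add: mult_pos_neg)
      then show ?thesis using mean by simp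
    qed
    then show ?thesis using y_powr 3 unfolding g_def by (simp add: algebra_simps)
  qed
qed

lemma powr_tangent:
  fixes p x y :: real
  assumes "p > 1" "x \<ge> 0" "y \<ge> 0"
  shows "y powr p + p * y powr (p - 1) * (x - y) \<le> x powr p"
  using powr_strict_tangent[OF assms] by (cases "x = y") auto

lemma convex_on_powr_nonneg:
  fixes s :: real
  assumes s: "s \<ge> 1"
  shows "convex_on {0..} (\<lambda>x. x powr s)"
proof (cases "s = 1")
  case True
  then show ?thesis by (simp add: convex_on_def)
next
  case False
  with s have s: "s > 1" by simp
  show ?thesis
  proof (rule convex_onI)
    fix t x y :: real
    assume t: "0 < t" "t < 1" and xy: "x \<in> {0..}" "y \<in> {0..}"
    define z where "z = (1 - t) *\<^sub>R x + t *\<^sub>R y"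
    have z: "z \<ge> 0" using t xy unfolding z_def by simp
    have "(1 - t) * (z powr s + s * z powr (s - 1) * (x - z))
          + t * (z powr s + s * z powr (s - 1) * (y - z)) = z powr s"
      unfolding z_def by (simp add: algebra_simps)
    moreover have "(1 - t) * (z powr s + s * z powr (s - 1) * (x - z)) \<le> (1 - t) * x powr s"
      "t * (z powr s + s * z powr (s - 1) * (y - z)) \<le> t * y powr s"
      using powr_tangent[OF s _ z] t xy by (intro mult_left_mono; simp)+
    ultimately show "z powr s \<le> (1 - t) * x powr s + t * y powr s" by linarith
  qed simp
qed

lemma powr_le_powr_iff:
  fixes a x y :: real
  assumes "a > 0" "x \<ge> 0" "y \<ge> 0"
  shows "x powr a \<le> y powr a \<longleftrightarrow> x \<le> y"
  using assms powr_mono2[of a x y] powr_less_mono2[of a y x] by fastforce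

lemma convex_on_sum_abs_powr:
  fixes s :: real
  assumes s: "s \<ge> 1"
  shows "convex_on UNIV (\<lambda>x::real^'n. \<Sum>f\<in>UNIV. \<bar>x $ f\<bar> powr s)"
proof (rule convex_onI)
  fix t :: real and x y :: "real^'n"
  assume t: "0 < t" "t < 1"
  have "\<bar>((1 - t) *\<^sub>R x + t *\<^sub>R y) $ f\<bar> powr s \<le> ((1 - t) * \<bar>x $ f\<bar> + t * \<bar>y $ f\<bar>) powr s" for f
    using s t abs_triangle_ineq[of "(1 - t) * x $ f" "t * y $ f"]
    by (intro powr_mono2) (auto simp: abs_mult)
  also have "\<dots> f \<le> (1 - t) * \<bar>x $ f\<bar> powr s + t * \<bar>y $ f\<bar> powr s" for f
    using convex_onD[OF convex_on_powr_nonneg[OF s], of t "\<bar>x $ f\<bar>" "\<bar>y $ f\<bar>"] t by simp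
  finally have "(\<Sum>f\<in>UNIV. \<bar>((1 - t) *\<^sub>R x + t *\<^sub>R y) $ f\<bar> powr s)
      \<le> (\<Sum>f\<in>UNIV. (1 - t) * \<bar>x $ f\<bar> powr s + t * \<bar>y $ f\<bar> powr s)"
    by (intro sum_mono)
  then show "(\<Sum>f\<in>UNIV. \<bar>((1 - t) *\<^sub>R x + t *\<^sub>R y) $ f\<bar> powr s)
      \<le> (1 - t) * (\<Sum>f\<in>UNIV. \<bar>x $ f\<bar> powr s) + t * (\<Sum>f\<in>UNIV. \<bar>y $ f\<bar> powr s)"
    by (simp add: sum.distrib sum_distrib_left)
qed simp

definition lp_norm :: "real \<Rightarrow> real^'n \<Rightarrow> real" where
  "lp_norm s x = (\<Sum>f\<in>UNIV. \<bar>x $ f\<bar> powr s) powr (1 / s)"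

lemma lp_norm_nonneg: "lp_norm s x \<ge> 0"
  unfolding lp_norm_def by simp

lemma lp_norm_eq_0_iff: "lp_norm s x = 0 \<longleftrightarrow> x = 0"
  unfolding lp_norm_def by (simp add: sum_nonneg_eq_0_iff vec_eq_iff)

lemma lp_norm_powr:
  assumes "s > 0"
  shows "lp_norm s x powr s = (\<Sum>f\<in>UNIV. \<bar>x $ f\<bar> powr s)"
  using assms unfolding lp_norm_def by (simp add: powr_powr sum_nonneg)

lemma lp_norm_scaleR:
  assumes "s > 0"
  shows "lp_norm s (t *\<^sub>R x) = \<bar>t\<bar> * lp_norm s x"
proof -
  have "(\<Sum>f\<in>UNIV. \<bar>(t *\<^sub>R x) $ f\<bar> powr s) = \<bar>t\<bar> powr s * (\<Sum>f\<in>UNIV. \<bar>x $ f\<bar> powr s)"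
    by (simp add: abs_mult powr_mult sum_distrib_left)
  then show ?thesis
    using assms unfolding lp_norm_def by (simp add: powr_mult powr_powr sum_nonneg)
qed

text \<open>Minkowski's inequality: with \<open>A = \<parallel>x\<parallel>\<^sub>s\<close> and \<open>B = \<parallel>y\<parallel>\<^sub>s\<close>, \<open>x + y\<close> is \<open>A + B\<close> times a
  convex combination of the unit vectors \<open>x / A\<close> and \<open>y / B\<close>, and the unit ball is convex.\<close>
lemma lp_norm_triangle:
  assumes s: "s \<ge> 1"
  shows "lp_norm s (x + y) \<le> lp_norm s x + lp_norm s y"
proof (cases "x = 0 \<or> y = 0")
  case True
  then show ?thesis using lp_norm_nonneg by auto
next
  case False
  define A B where "A = lp_norm s x" and "B = lp_norm s y"
  have AB: "A > 0" "B > 0"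
    using False lp_norm_nonneg lp_norm_eq_0_iff unfolding A_def B_def by (metis less_le)+
  have unit: "(\<Sum>f\<in>UNIV. \<bar>(inverse a *\<^sub>R z) $ f\<bar> powr s) = 1" if "a = lp_norm s z" "a > 0" for a z
    using lp_norm_powr[of s "inverse a *\<^sub>R z"] lp_norm_scaleR[of s "inverse a" z] that s by simp
  define t where "t = B / (A + B)"
  define z where "z = (1 - t) *\<^sub>R (inverse A *\<^sub>R x) + t *\<^sub>R (inverse B *\<^sub>R y)"
  have t: "0 \<le> t" "t \<le> 1" "(A + B) * (1 - t) * inverse A = 1" "(A + B) * t * inverse B = 1"
    using AB unfolding t_def by (simp_all add: field_simps add_pos_pos less_imp_neq[symmetric])
  have "(\<Sum>f\<in>UNIV. \<bar>z $ f\<bar> powr s) \<le> 1"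
    using convex_onD[OF convex_on_sum_abs_powr[OF s] t(1,2), of "inverse A *\<^sub>R x" "inverse B *\<^sub>R y"]
      unit[OF A_def] unit[OF B_def] AB
    unfolding z_def by simp
  then have "lp_norm s z \<le> 1"
    unfolding lp_norm_def using s by (intro powr_le1) (auto simp: sum_nonneg)
  moreover have "x + y = (A + B) *\<^sub>R z"
    unfolding z_def using t(3,4) by (simp add: scaleR_add_right mult.assoc)
  ultimately show ?thesis
    using lp_norm_scaleR[of s "A + B" z] AB s unfolding A_def B_def by simp
qed

lemma convex_on_lp_norm:
  assumes s: "s \<ge> 1"
  shows "convex_on UNIV (lp_norm s :: real^'n \<Rightarrow> real)"
proof (rule convex_onI)
  fix t :: real and x y :: "real^'n"
  assume "0 < t" "t < 1"
  have "lp_norm s ((1 - t) *\<^sub>R x + t *\<^sub>R y) \<le> lp_norm s ((1 - t) *\<^sub>R x) + lp_norm s (t *\<^sub>R y)"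
    by (rule lp_norm_triangle[OF s])
  also have "\<dots> = (1 - t) * lp_norm s x + t * lp_norm s y"
    using \<open>0 < t\<close> \<open>t < 1\<close> s by (simp add: lp_norm_scaleR)
  finally show "lp_norm s ((1 - t) *\<^sub>R x + t *\<^sub>R y) \<le> (1 - t) * lp_norm s x + t * lp_norm s y" .
qed simp

definition weighted_cost :: "real^'n \<Rightarrow> real \<Rightarrow> real^'n \<Rightarrow> real" where
  "weighted_cost c p e = (\<Sum>f\<in>UNIV. c $ f * (e $ f) powr p)"

definition optimal_response :: "real^'n \<Rightarrow> real \<Rightarrow> real \<Rightarrow> real^'n \<Rightarrow> real^'n \<Rightarrow> bool" where
  "optimal_response c p \<alpha> w e \<longleftrightarrow> nonneg_vec e \<and> \<alpha> \<le> w \<bullet> e \<and>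
     (\<forall>e'. nonneg_vec e' \<and> \<alpha> \<le> w \<bullet> e' \<longrightarrow> weighted_cost c p e \<le> weighted_cost c p e')"

definition desirable_weights :: "real^'n \<Rightarrow> real \<Rightarrow> real \<Rightarrow> 'n set \<Rightarrow> real \<Rightarrow> (real^'n) set" where
  "desirable_weights c p \<alpha> D \<beta> =
     {w. nonneg_vec w \<and> (\<forall>e. optimal_response c p \<alpha> w e \<longrightarrow> beta_desirable D \<beta> e)}"

lemma weighted_cost_nonneg:
  assumes "\<forall>f. c $ f > 0"
  shows "weighted_cost c p e \<ge> 0"
  unfolding weighted_cost_def using assms by (intro sum_nonneg) (simp add: less_imp_le)

lemma optimal_effort_iff_optimal_response:
  assumes "\<forall>f. c $ f > 0" and "p > 0"
  shows "optimal_effort C c p \<alpha> h0 e \<longleftrightarrow> optimal_response c p \<alpha> (C *v h0) e"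
proof -
  have "effort_cost c p e \<le> effort_cost c p e' \<longleftrightarrow> weighted_cost c p e \<le> weighted_cost c p e'"
    for e e'
    unfolding effort_cost_def weighted_cost_def[symmetric]
    using assms by (simp add: powr_le_powr_iff weighted_cost_nonneg)
  then show ?thesis
    unfolding optimal_effort_def optimal_response_def feasible_effort_def by blast
qed

lemma desirable_classifiers_eq_vimage:
  assumes "\<forall>f. c $ f > 0" and "p > 0"
  shows "desirable_classifiers C D c p \<alpha> \<beta> = (\<lambda>h. C *v h) -` desirable_weights c p \<alpha> D \<beta>"
  unfolding desirable_classifiers_def desirable_weights_def
    optimal_effort_iff_optimal_response[OF assms] by auto

lemma zero_in_desirable_weights:
  assumes "\<alpha> > 0"
  shows "0 \<in> desirable_weights c p \<alpha> D \<beta>"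
  using assms unfolding desirable_weights_def optimal_response_def nonneg_vec_def by simp

lemma beta_desirable_scaleR:
  assumes "k > 0"
  shows "beta_desirable D \<beta> (k *\<^sub>R v) \<longleftrightarrow> beta_desirable D \<beta> v"
proof -
  have "sqrt (\<Sum>i\<in>D. ((k *\<^sub>R v) $ i)\<^sup>2) = k * sqrt (\<Sum>i\<in>D. (v $ i)\<^sup>2)"
    using assms by (simp add: power_mult_distrib sum_distrib_left[symmetric] real_sqrt_mult)
  then show ?thesis
    using assms unfolding beta_desirable_def by (simp add: mult.left_commute)
qed

section \<open>The case \<open>p > 1\<close>\<close>

text \<open>Sufficiency of the Lagrange condition: if \<open>c\<^sub>f p e\<^sup>*\<^sub>f\<^bsup>p-1\<^esup> = \<mu> w\<^sub>f\<close> for all \<open>f\<close>, then \<open>e\<^sup>*\<close>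
  strictly minimises the Lagrangian over the nonnegative orthant, by strict convexity of \<open>t\<^sup>p\<close>.\<close>
lemma weighted_cost_gt_lagrangian:
  fixes c w e e' :: "real^'n"
  assumes p: "p > 1" and c: "\<forall>f. c $ f > 0"
    and e: "nonneg_vec e" and e': "nonneg_vec e'" and ne: "e' \<noteq> e"
    and lagrange: "\<And>f. c $ f * (p * e $ f powr (p - 1)) = \<mu> * w $ f"
  shows "weighted_cost c p e + \<mu> * (w \<bullet> e' - w \<bullet> e) < weighted_cost c p e'"
proof -
  define L where "L f = c $ f * e $ f powr p + \<mu> * w $ f * (e' $ f - e $ f)" for f
  have L: "L f = c $ f * (e $ f powr p + p * e $ f powr (p - 1) * (e' $ f - e $ f))" for f
    unfolding L_def lagrange[symmetric] by (simp add: algebra_simps)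
  have "L f \<le> c $ f * e' $ f powr p" for f
    unfolding L using powr_tangent[OF p] e e' c unfolding nonneg_vec_def by (simp add: mult_left_mono)
  moreover have "L f < c $ f * e' $ f powr p" if "e' $ f \<noteq> e $ f" for f
    unfolding L using powr_strict_tangent[OF p _ _ that] e e' c unfolding nonneg_vec_def by simp
  moreover obtain f where "e' $ f \<noteq> e $ f" using ne by (metis vec_eq_iff)
  ultimately have "(\<Sum>f\<in>UNIV. L f) < weighted_cost c p e'"
    unfolding weighted_cost_def by (intro sum_strict_mono_ex1) auto
  then show ?thesis
    unfolding L_def weighted_cost_def inner_vec_def inner_real_def
    by (simp add: sum.distrib sum_distrib_left sum_subtractf algebra_simps)
qed

lemma optimal_response_powr:
  fixes w c :: "real^'n"
  assumes p: "p > 1" and c: "\<forall>f. c $ f > 0" and \<alpha>: "\<alpha> > 0"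
    and w: "nonneg_vec w" "w \<noteq> 0"
  defines "v \<equiv> \<chi> f. (w $ f / c $ f) powr (1 / (p - 1))"
  defines "k \<equiv> \<alpha> / (w \<bullet> v)"
  shows "k > 0" and "optimal_response c p \<alpha> w e \<longleftrightarrow> e = k *\<^sub>R v"
proof -
  have w_nonneg: "w $ f \<ge> 0" for f using w unfolding nonneg_vec_def by auto
  obtain f where "w $ f \<noteq> 0" using w(2) by (metis vec_eq_iff zero_index)
  then have "0 < w $ f * v $ f"
    using w_nonneg[of f] c unfolding v_def by (simp add: less_le)
  then have "w \<bullet> v > 0"
    unfolding inner_vec_def inner_real_def using w_nonneg
    by (intro sum_pos2[of UNIV f]) (auto simp: v_def)
  then show k: "k > 0" unfolding k_def using \<alpha> by simp
  define e\<^sub>0 where "e\<^sub>0 = k *\<^sub>R v"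
  define \<mu> where "\<mu> = p * k powr (p - 1)"
  have \<mu>: "\<mu> \<ge> 0" unfolding \<mu>_def using p by simp
  have e\<^sub>0_nonneg: "nonneg_vec e\<^sub>0"
    using k unfolding e\<^sub>0_def nonneg_vec_def v_def by simp
  have e\<^sub>0_score: "w \<bullet> e\<^sub>0 = \<alpha>"
    using \<open>w \<bullet> v > 0\<close> unfolding e\<^sub>0_def k_def by simp
  have lagrange: "c $ f * (p * e\<^sub>0 $ f powr (p - 1)) = \<mu> * w $ f" for f
  proof -
    have "v $ f powr (p - 1) = w $ f / c $ f"
      unfolding v_def using p w_nonneg[of f] c[rule_format, of f] by (simp add: powr_powr)
    then show ?thesis
      unfolding e\<^sub>0_def \<mu>_def using k c[rule_format, of f] by (simp add: powr_mult field_simps)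
  qed
  have gt: "weighted_cost c p e\<^sub>0 < weighted_cost c p e'"
    if "nonneg_vec e'" "\<alpha> \<le> w \<bullet> e'" "e' \<noteq> e\<^sub>0" for e'
  proof -
    have "0 \<le> \<mu> * (w \<bullet> e' - w \<bullet> e\<^sub>0)"
      using \<mu> that(2) e\<^sub>0_score by simp
    then show ?thesis
      using weighted_cost_gt_lagrangian[OF p c e\<^sub>0_nonneg that(1,3) lagrange] by linarith
  qed
  have "optimal_response c p \<alpha> w e\<^sub>0"
    unfolding optimal_response_def using e\<^sub>0_nonneg e\<^sub>0_score gt by force
  then show "optimal_response c p \<alpha> w e \<longleftrightarrow> e = k *\<^sub>R v"
    unfolding e\<^sub>0_def[symmetric] optimal_response_def using gt e\<^sub>0_nonneg e\<^sub>0_score by force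
qed

lemma desirable_weights_powr:
  fixes c :: "real^'n"
  assumes p: "p > 1" and c: "\<forall>f. c $ f > 0" and \<alpha>: "\<alpha> > 0"
  shows "desirable_weights c p \<alpha> D \<beta> =
    {w. nonneg_vec w \<and> beta_desirable D \<beta> (\<chi> f. (w $ f / c $ f) powr (1 / (p - 1)))}"
proof (intro set_eqI)
  fix w :: "real^'n"
  show "w \<in> desirable_weights c p \<alpha> D \<beta> \<longleftrightarrow>
    w \<in> {w. nonneg_vec w \<and> beta_desirable D \<beta> (\<chi> f. (w $ f / c $ f) powr (1 / (p - 1)))}"
  proof (cases "nonneg_vec w \<and> w \<noteq> 0")
    case True
    then have "nonneg_vec w" "w \<noteq> 0" by auto
    note opt = optimal_response_powr[OF p c \<alpha> this]
    show ?thesis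
      unfolding desirable_weights_def mem_Collect_eq opt(2) using beta_desirable_scaleR[OF opt(1)] by auto
  next
    case False
    moreover have "beta_desirable D \<beta> (\<chi> f. (0 $ f / c $ f) powr (1 / (p - 1)))"
      by (simp add: beta_desirable_def zero_vec_def[symmetric])
    ultimately show ?thesis
      using zero_in_desirable_weights[OF \<alpha>, of c p D \<beta>] unfolding desirable_weights_def by auto
  qed
qed

lemma beta_desirable_powr_iff:
  fixes x :: "real^'n"
  assumes x: "nonneg_vec x" and s: "s > 0" and \<beta>: "\<beta> > 0"
  shows "beta_desirable {d} \<beta> (\<chi> f. x $ f powr (s / 2)) \<longleftrightarrow> \<beta> powr (2 / s) * lp_norm s x \<le> x $ d"
proof -
  have x_nonneg: "x $ f \<ge> 0" for f using x unfolding nonneg_vec_def by simp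
  have "norm (\<chi> f. x $ f powr (s / 2)) = sqrt (\<Sum>f\<in>UNIV. x $ f powr s)"
    unfolding norm_vec_def L2_set_def by (simp add: power2_eq_square powr_add[symmetric])
  also have "\<dots> = sqrt (lp_norm s x powr s)"
    using lp_norm_powr[OF s, of x] x_nonneg by simp
  also have "\<dots> = lp_norm s x powr (s / 2)"
    by (rule powr_half_sqrt_powr[OF lp_norm_nonneg, symmetric])
  finally have "beta_desirable {d} \<beta> (\<chi> f. x $ f powr (s / 2)) \<longleftrightarrow>
      (\<beta> powr (2 / s) * lp_norm s x) powr (s / 2) \<le> x $ d powr (s / 2)"
    unfolding beta_desirable_def using s \<beta> lp_norm_nonneg
    by (simp add: powr_mult powr_powr real_sqrt_abs')
  also have "\<dots> \<longleftrightarrow> \<beta> powr (2 / s) * lp_norm s x \<le> x $ d"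
    using s x_nonneg mult_nonneg_nonneg[OF powr_ge_zero lp_norm_nonneg] by (intro powr_le_powr_iff) auto
  finally show ?thesis .
qed

lemma convex_nonneg_vec: "convex {x. nonneg_vec x}"
  unfolding nonneg_vec_def by (rule convexI) simp

lemma convex_lp_norm_cone:
  assumes "s \<ge> 1" and "k \<ge> 0"
  shows "convex {x::real^'n. k * lp_norm s x \<le> x $ d}"
  unfolding convex_alt
proof (intro ballI allI impI)
  fix x y :: "real^'n" and t :: real
  assume "x \<in> {x. k * lp_norm s x \<le> x $ d}" "y \<in> {x. k * lp_norm s x \<le> x $ d}" "0 \<le> t \<and> t \<le> 1"
  then have x: "k * lp_norm s x \<le> x $ d" and y: "k * lp_norm s y \<le> y $ d" and t: "0 \<le> t" "t \<le> 1"
    by auto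
  have "k * lp_norm s ((1 - t) *\<^sub>R x + t *\<^sub>R y) \<le> k * ((1 - t) * lp_norm s x + t * lp_norm s y)"
    using convex_onD[OF convex_on_lp_norm[OF assms(1)] t UNIV_I UNIV_I] assms(2) by (rule mult_left_mono)
  also have "\<dots> = (1 - t) * (k * lp_norm s x) + t * (k * lp_norm s y)"
    by (simp add: algebra_simps)
  also have "\<dots> \<le> (1 - t) * x $ d + t * y $ d"
    using x y t by (intro add_mono mult_left_mono) auto
  finally show "(1 - t) *\<^sub>R x + t *\<^sub>R y \<in> {x. k * lp_norm s x \<le> x $ d}"
    by simp
qed

lemma convex_desirable_weights_powr:
  fixes c :: "real^'n"
  assumes p: "1 < p" "p \<le> 3" and c: "\<forall>f. c $ f > 0" and \<alpha>: "\<alpha> > 0" and \<beta>: "\<beta> > 0"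
  shows "convex (desirable_weights c p \<alpha> {d} \<beta>)"
proof -
  define s where "s = 2 / (p - 1)"
  have s: "s \<ge> 1" "s > 0" "1 / (p - 1) = s / 2"
    using p unfolding s_def by (auto simp: field_simps)
  define L :: "real^'n \<Rightarrow> real^'n" where "L w = (\<chi> f. w $ f / c $ f)" for w
  have "linear L"
    unfolding L_def by (rule linearI) (simp_all add: vec_eq_iff add_divide_distrib)
  have "nonneg_vec (L w)" if "nonneg_vec w" for w
    using that c unfolding L_def nonneg_vec_def by (simp add: less_imp_le)
  then have "beta_desirable {d} \<beta> (\<chi> f. (w $ f / c $ f) powr (s / 2))
      \<longleftrightarrow> L w \<in> {x. \<beta> powr (2 / s) * lp_norm s x \<le> x $ d}" if "nonneg_vec w" for w
    using beta_desirable_powr_iff[OF _ s(2) \<beta>, of "L w" d] that by (simp add: L_def)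
  then have "desirable_weights c p \<alpha> {d} \<beta>
      = {w. nonneg_vec w} \<inter> L -` {x. \<beta> powr (2 / s) * lp_norm s x \<le> x $ d}"
    unfolding desirable_weights_powr[OF p(1) c \<alpha>] s(3) by auto
  then show ?thesis
    by (metis convex_Int convex_nonneg_vec
        convex_linear_vimage[OF \<open>linear L\<close> convex_lp_norm_cone[OF s(1) powr_ge_zero]])
qed

section \<open>The case \<open>p = 1\<close>\<close>

lemma optimal_response_one_iff:
  "optimal_response c 1 \<alpha> w e \<longleftrightarrow> nonneg_vec e \<and> \<alpha> \<le> w \<bullet> e \<and>
     (\<forall>e'. nonneg_vec e' \<and> \<alpha> \<le> w \<bullet> e' \<longrightarrow> c \<bullet> e \<le> c \<bullet> e')"
proof -
  have "weighted_cost c 1 e = c \<bullet> e" if "nonneg_vec e" for e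
    using that unfolding weighted_cost_def nonneg_vec_def inner_vec_def inner_real_def by simp
  then show ?thesis unfolding optimal_response_def by metis
qed

text \<open>Exchange argument: effort on a feature \<open>u\<close> with a smaller ratio \<open>w\<^sub>u / c\<^sub>u\<close> than
  \<open>w\<^sub>d / c\<^sub>d\<close> can be moved to \<open>d\<close> at the same score and a strictly lower cost.\<close>
lemma optimal_response_one_concentrated:
  fixes c w e :: "real^'n"
  assumes c: "\<forall>f. c $ f > 0" and w: "nonneg_vec w"
    and dominant: "\<forall>u. u \<noteq> d \<longrightarrow> w $ u / c $ u < w $ d / c $ d"
    and opt: "optimal_response c 1 \<alpha> w e" and u: "u \<noteq> d"
  shows "e $ u = 0"
proof (rule ccontr)
  assume "e $ u \<noteq> 0"
  moreover have e: "nonneg_vec e" "\<alpha> \<le> w \<bullet> e"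
    and min: "\<And>e'. nonneg_vec e' \<Longrightarrow> \<alpha> \<le> w \<bullet> e' \<Longrightarrow> c \<bullet> e \<le> c \<bullet> e'"
    using opt unfolding optimal_response_one_iff by auto
  ultimately have eu: "e $ u > 0" unfolding nonneg_vec_def by (metis less_le)
  have ratio: "w $ u / c $ u < w $ d / c $ d" using dominant u by simp
  moreover have "0 \<le> w $ u / c $ u" using w c unfolding nonneg_vec_def by (simp add: less_imp_le)
  ultimately have "0 < w $ d / c $ d" by linarith
  then have wd: "w $ d > 0" using c[rule_format, of d] by (simp add: zero_less_divide_iff)
  define \<delta> where "\<delta> = e $ u * w $ u / w $ d"
  define e' where "e' = e + \<delta> *\<^sub>R axis d 1 - (e $ u) *\<^sub>R axis u (1::real)"
  have "\<delta> \<ge> 0" unfolding \<delta>_def using eu w wd unfolding nonneg_vec_def by simp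
  then have "nonneg_vec e'" using e u unfolding e'_def nonneg_vec_def axis_def by auto
  moreover have "w \<bullet> e' = w \<bullet> e"
    unfolding e'_def \<delta>_def using wd by (simp add: inner_add_right inner_diff_right inner_axis)
  moreover have "\<delta> * c $ d < e $ u * c $ u"
    using ratio eu wd c unfolding \<delta>_def by (simp add: field_simps)
  then have "c \<bullet> e' < c \<bullet> e"
    unfolding e'_def by (simp add: inner_add_right inner_diff_right inner_axis)
  ultimately show False using min e(2) by fastforce
qed

lemma beta_desirable_concentrated:
  assumes "\<beta> \<le> 1" and "\<forall>u. u \<noteq> d \<longrightarrow> e $ u = 0"
  shows "beta_desirable {d} \<beta> e"
proof -
  have "(\<Sum>f\<in>UNIV. (e $ f)\<^sup>2) = (\<Sum>f\<in>UNIV. if f = d then (e $ d)\<^sup>2 else 0)"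
    using assms(2) by (intro sum.cong) auto
  then have "norm e = \<bar>e $ d\<bar>"
    unfolding norm_vec_def L2_set_def by simp
  then show ?thesis
    unfolding beta_desirable_def using mult_right_mono[OF assms(1) abs_ge_zero] by simp
qed

lemma optimal_response_one_axis:
  fixes c w :: "real^'n"
  assumes c: "\<forall>f. c $ f > 0" and \<alpha>: "\<alpha> > 0" and wm: "w $ m > 0"
    and max: "\<forall>f. w $ f / c $ f \<le> w $ m / c $ m"
  shows "optimal_response c 1 \<alpha> w ((\<alpha> / w $ m) *\<^sub>R axis m 1)"
  unfolding optimal_response_one_iff
proof (intro conjI allI impI)
  show "nonneg_vec ((\<alpha> / w $ m) *\<^sub>R axis m 1)"
    using \<alpha> wm unfolding nonneg_vec_def axis_def by simp
  show "\<alpha> \<le> w \<bullet> (\<alpha> / w $ m) *\<^sub>R axis m 1"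
    using wm by (simp add: inner_axis)
  fix e' assume e': "nonneg_vec e' \<and> \<alpha> \<le> w \<bullet> e'"
  have "c $ m / w $ m * w $ f \<le> c $ f" for f
    using max c wm by (simp add: field_simps)
  then have "(\<Sum>f\<in>UNIV. c $ m / w $ m * w $ f * e' $ f) \<le> (\<Sum>f\<in>UNIV. c $ f * e' $ f)"
    using e' unfolding nonneg_vec_def by (intro sum_mono mult_right_mono) auto
  then have "c $ m / w $ m * (w \<bullet> e') \<le> c \<bullet> e'"
    unfolding inner_vec_def inner_real_def by (simp add: sum_distrib_left mult.assoc)
  moreover have "c $ m / w $ m * \<alpha> \<le> c $ m / w $ m * (w \<bullet> e')"
    using e' wm c by (intro mult_left_mono) (auto simp: less_imp_le)
  ultimately have "c $ m / w $ m * \<alpha> \<le> c \<bullet> e'" by linarith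
  then show "c \<bullet> (\<alpha> / w $ m) *\<^sub>R axis m 1 \<le> c \<bullet> e'"
    by (simp add: inner_axis mult.commute)
qed

lemma ex_other_maximizer:
  fixes g :: "'a::finite \<Rightarrow> 'b::linorder"
  assumes "u \<noteq> d" and "g d \<le> g u"
  shows "\<exists>m. m \<noteq> d \<and> (\<forall>f. g f \<le> g m)"
proof -
  have "Max (range g) \<in> range g" by (rule Max_in) auto
  then obtain m where m: "g m = Max (range g)" by (metis rangeE)
  then have "g f \<le> g m" for f by simp
  then show ?thesis
    using assms by (metis order_antisym)
qed

lemma desirable_weights_one:
  fixes c :: "real^'n"
  assumes c: "\<forall>f. c $ f > 0" and \<alpha>: "\<alpha> > 0" and \<beta>: "0 < \<beta>" "\<beta> \<le> 1"
  shows "desirable_weights c 1 \<alpha> {d} \<beta> =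
    insert 0 {w. nonneg_vec w \<and> (\<forall>u. u \<noteq> d \<longrightarrow> w $ u / c $ u < w $ d / c $ d)}"
proof (intro set_eqI iffI)
  fix w assume w: "w \<in> desirable_weights c 1 \<alpha> {d} \<beta>"
  then have w_nonneg: "nonneg_vec w" unfolding desirable_weights_def by simp
  show "w \<in> insert 0 {w. nonneg_vec w \<and> (\<forall>u. u \<noteq> d \<longrightarrow> w $ u / c $ u < w $ d / c $ d)}"
  proof (rule ccontr)
    assume "\<not> ?thesis"
    then obtain u where "w \<noteq> 0" "u \<noteq> d" "w $ d / c $ d \<le> w $ u / c $ u"
      using w_nonneg by auto
    then obtain m where m: "m \<noteq> d" "\<forall>f. w $ f / c $ f \<le> w $ m / c $ m"
      using ex_other_maximizer[of u d "\<lambda>f. w $ f / c $ f"] by blast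
    obtain f where "w $ f \<noteq> 0" using \<open>w \<noteq> 0\<close> by (metis vec_eq_iff zero_index)
    then have "0 < w $ f / c $ f"
      using w_nonneg c[rule_format, of f] unfolding nonneg_vec_def by (simp add: less_le)
    also have "\<dots> \<le> w $ m / c $ m" using m(2) by simp
    finally have wm: "w $ m > 0"
      using c[rule_format, of m] by (simp add: zero_less_divide_iff)
    define e where "e = (\<alpha> / w $ m) *\<^sub>R axis m (1::real)"
    have "beta_desirable {d} \<beta> e"
      using w optimal_response_one_axis[OF c \<alpha> wm m(2)]
      unfolding desirable_weights_def e_def by simp
    moreover have "e $ d = 0" using m(1) unfolding e_def axis_def by simp
    moreover have "0 < \<beta> * norm e" using \<beta>(1) \<alpha> wm unfolding e_def by simp
    ultimately show False
      unfolding beta_desirable_def by simp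
  qed
next
  fix w assume "w \<in> insert 0 {w. nonneg_vec w \<and> (\<forall>u. u \<noteq> d \<longrightarrow> w $ u / c $ u < w $ d / c $ d)}"
  then consider "w = 0" | "nonneg_vec w" "\<forall>u. u \<noteq> d \<longrightarrow> w $ u / c $ u < w $ d / c $ d"
    by blast
  then show "w \<in> desirable_weights c 1 \<alpha> {d} \<beta>"
  proof cases
    case 1
    then show ?thesis using zero_in_desirable_weights[OF \<alpha>] by simp
  next
    case 2
    show ?thesis
      unfolding desirable_weights_def
    proof (intro CollectI conjI allI impI 2(1))
      fix e assume "optimal_response c 1 \<alpha> w e"
      then show "beta_desirable {d} \<beta> e"
        using optimal_response_one_concentrated[OF c 2] beta_desirable_concentrated[OF \<beta>(2)] by blast
    qed
  qed
qed

lemma convex_insert_zero: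
  fixes S :: "'a::real_vector set"
  assumes "convex S" and cone: "\<And>x t. x \<in> S \<Longrightarrow> t > 0 \<Longrightarrow> t *\<^sub>R x \<in> S"
  shows "convex (insert 0 S)"
proof (rule convexI)
  fix x y :: 'a and u v :: real
  assume "x \<in> insert 0 S" "y \<in> insert 0 S" "0 \<le> u" "0 \<le> v" "u + v = 1"
  then consider "x = 0" "y = 0" | "x = 0" "y \<in> S" | "x \<in> S" "y = 0" | "x \<in> S" "y \<in> S"
    by blast
  then show "u *\<^sub>R x + v *\<^sub>R y \<in> insert 0 S"
  proof cases
    case 2
    then show ?thesis using cone[of y v] \<open>0 \<le> v\<close> by (cases "v = 0") auto
  next
    case 3
    then show ?thesis using cone[of x u] \<open>0 \<le> u\<close> by (cases "u = 0") auto
  next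
    case 4
    then show ?thesis using convexD[OF \<open>convex S\<close>] \<open>0 \<le> u\<close> \<open>0 \<le> v\<close> \<open>u + v = 1\<close> by blast
  qed simp
qed

lemma convex_desirable_weights_one:
  fixes c :: "real^'n"
  assumes c: "\<forall>f. c $ f > 0" and \<alpha>: "\<alpha> > 0" and \<beta>: "0 < \<beta>" "\<beta> \<le> 1"
  shows "convex (desirable_weights c 1 \<alpha> {d} \<beta>)"
proof -
  define S where "S = {w::real^'n. nonneg_vec w \<and> (\<forall>u. u \<noteq> d \<longrightarrow> w $ u / c $ u < w $ d / c $ d)}"
  have halfspace: "{w::real^'n. w $ u / c $ u < w $ d / c $ d}
      = {w. (axis u (inverse (c $ u)) - axis d (inverse (c $ d))) \<bullet> w < 0}" for u
    by (auto simp: inner_diff_left inner_axis' divide_inverse mult.commute)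
  have "S = {w. nonneg_vec w} \<inter> (\<Inter>u\<in>- {d}. {w. w $ u / c $ u < w $ d / c $ d})"
    unfolding S_def by auto
  then have "convex S"
    unfolding halfspace by (simp add: convex_Int convex_INT convex_nonneg_vec convex_halfspace_lt)
  moreover have "t *\<^sub>R w \<in> S" if "w \<in> S" "t > 0" for w t
    using that unfolding S_def nonneg_vec_def
    by (simp add: times_divide_eq_right[symmetric] del: times_divide_eq_right)
  ultimately show ?thesis
    unfolding desirable_weights_one[OF assms] S_def[symmetric] by (rule convex_insert_zero)
qed

theorem proposition3:
  fixes A :: "real^'n^'n" and D U :: "'n set" and c :: "real^'n"
    and \<alpha> p \<beta> :: real
  assumes "is_dag A"
    and "D \<inter> U = {}" and "D \<union> U = UNIV" and "card D = 1"
    and "\<forall>f. c $ f > 0" and "\<alpha> > 0"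
    and "1 \<le> p" and "p \<le> 3"
    and "0 < \<beta>" and "\<beta> \<le> 1"
  shows "convex (desirable_classifiers (contribution_matrix A) D c p \<alpha> \<beta>)"
proof -
  obtain d where D: "D = {d}"
    using assms(4) card_1_singletonE by blast
  have "p > 0" using assms(7) by simp
  have "convex (desirable_weights c p \<alpha> {d} \<beta>)"
  proof (cases "p = 1")
    case True
    then show ?thesis
      using convex_desirable_weights_one[OF assms(5,6,9,10)] by simp
  next
    case False
    then show ?thesis
      using convex_desirable_weights_powr[OF _ assms(8,5,6,9)] assms(7) by simp
  qed
  then show ?thesis
    unfolding D desirable_classifiers_eq_vimage[OF assms(5) \<open>p > 0\<close>]
    by (rule convex_linear_vimage[OF matrix_vector_mul_linear])
qed

end
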